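(* Let $\Gamma$ be an elliptic graph with NN-elliptic sequence $\{B_j\}_{j=-1}^m$ and cycles $C_j$, and let $-1\le j\le m-1$. If $v\in\mathcal V(\Gamma)\setminus\mathcal V(B_{j+1})$ satisfies $(E_{B_{j+1}},E_v)=1$, where $E_{B_{j+1}}=\sum_{w\in\mathcal V(B_{j+1})}E_w$, then $(C_j,E_v)=e_v+1$.
   Context: Let $\Gamma$ be a finite connected tree with vertex set $\mathcal V$, each vertex $v$ decorated by an integer $e_v$ (genera zero). $L=\mathbb Z\langle E_v\rangle$ with form $(E_v,E_v)=e_v$, $(E_v,E_w)=1$ for adjacent $v\ne w$, $0$ otherwise, assumed negative definite; $L'$ the dual lattice, $[l']$ the class in $L'/L$; $\ge$ coordinatewise, $l>0$ if $l\ge0,l\ne0$; $|l'|$ the support. $Z_K$ with $(Z_K,E_v)=e_v+2$; $\chi(l')=-(l',l'-Z_K)/2$. $\mathcal S'=\{l':(l',E_v)\le0\ \forall v\}$, $s_h=\min\{l'\in\mathcal S':[l']=h\}$; $Z_{min}(B)$ the minimal nonzero element of $\mathcal S'(B)\cap L(B)$ for a connected full subgraph $B$. Elliptic graph: $e_v\le-2$ for all $v$, $\min_{l\in L,l>0}\chi(l)=0$. NN-elliptic sequence: $B_{-1}=\Gamma$, $Z_{B_{-1}}=s_{[Z_K]}$, $B_0=|Z_K-s_{[Z_K]}|$; for $j\ge0$, $Z_{B_j}=Z_{min}(B_j)$, and if $Z_K-\sum_{i=-1}^jZ_{B_i}\ne0$ then $B_{j+1}=|Z_K-\sum_{i=-1}^jZ_{B_i}|$;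 $m$ is the index with $Z_K=\sum_{i=-1}^mZ_{B_i}$; $C_j=\sum_{i=-1}^jZ_{B_i}$. *)

theory Defs
  imports Complex_Main "HOL-Library.Function_Algebras"
begin

text \<open>Rational cycles l' in L tensor Q are represented by
  their coefficient functions 'v => rat with respect to the basis E_v, vanishing off V.\<close>

definition is_tree :: "'v set \<Rightarrow> ('v \<Rightarrow> 'v \<Rightarrow> bool) \<Rightarrow> bool" where
  "is_tree V adj \<longleftrightarrow> finite V \<and> V \<noteq> {}
     \<and> (\<forall>v w. adj v w \<longrightarrow> v \<in> V \<and> w \<in> V \<and> v \<noteq> w \<and> adj w v)
     \<and> (\<forall>v\<in>V. \<forall>w\<in>V. (adj\<^sup>*\<^sup>*) v w)
     \<and> card {(v, w). adj v w} = 2 * (card V - 1)"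

definition Evec :: "'v \<Rightarrow> 'v \<Rightarrow> rat" where
  "Evec v = (\<lambda>w. if w = v then 1 else 0)"

definition Eset :: "'v set \<Rightarrow> 'v \<Rightarrow> rat" where
  "Eset B = (\<lambda>w. if w \<in> B then 1 else 0)"

definition imat :: "('v \<Rightarrow> 'v \<Rightarrow> bool) \<Rightarrow> ('v \<Rightarrow> int) \<Rightarrow> 'v \<Rightarrow> 'v \<Rightarrow> rat" where
  "imat adj e v w = (if v = w then of_int (e v) else if adj v w then 1 else 0)"

definition form :: "'v set \<Rightarrow> ('v \<Rightarrow> 'v \<Rightarrow> bool) \<Rightarrow> ('v \<Rightarrow> int)
     \<Rightarrow> ('v \<Rightarrow> rat) \<Rightarrow> ('v \<Rightarrow> rat) \<Rightarrow> rat" where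
  "form V adj e x y = (\<Sum>v\<in>V. \<Sum>w\<in>V. x v * y w * imat adj e v w)"

definition supported :: "'v set \<Rightarrow> ('v \<Rightarrow> rat) \<Rightarrow> bool" where
  "supported B x \<longleftrightarrow> (\<forall>v. v \<notin> B \<longrightarrow> x v = 0)"

definition lat :: "'v set \<Rightarrow> ('v \<Rightarrow> rat) set" where
  "lat B = {x. supported B x \<and> (\<forall>v. x v \<in> \<int>)}"

definition dual_lat :: "'v set \<Rightarrow> ('v \<Rightarrow> 'v \<Rightarrow> bool) \<Rightarrow> ('v \<Rightarrow> int) \<Rightarrow> ('v \<Rightarrow> rat) set" where
  "dual_lat V adj e = {x. supported V x \<and> (\<forall>v\<in>V. form V adj e x (Evec v) \<in> \<int>)}"

definition neg_definite :: "'v set \<Rightarrow> ('v \<Rightarrow> 'v \<Rightarrow> bool) \<Rightarrow> ('v \<Rightarrow> int) \<Rightarrow> bool" where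
  "neg_definite V adj e \<longleftrightarrow> (\<forall>l\<in>lat V. l \<noteq> 0 \<longrightarrow> form V adj e l l < 0)"

definition ZK :: "'v set \<Rightarrow> ('v \<Rightarrow> 'v \<Rightarrow> bool) \<Rightarrow> ('v \<Rightarrow> int) \<Rightarrow> 'v \<Rightarrow> rat" where
  "ZK V adj e = (THE z. supported V z \<and> (\<forall>v\<in>V. form V adj e z (Evec v) = of_int (e v) + 2))"

definition chi :: "'v set \<Rightarrow> ('v \<Rightarrow> 'v \<Rightarrow> bool) \<Rightarrow> ('v \<Rightarrow> int) \<Rightarrow> ('v \<Rightarrow> rat) \<Rightarrow> rat" where
  "chi V adj e l = - form V adj e l (l - ZK V adj e) / 2"

definition lipman :: "'v set \<Rightarrow> ('v \<Rightarrow> 'v \<Rightarrow> bool) \<Rightarrow> ('v \<Rightarrow> int) \<Rightarrow> ('v \<Rightarrow> rat) set" where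
  "lipman V adj e = {x \<in> dual_lat V adj e. \<forall>v\<in>V. form V adj e x (Evec v) \<le> 0}"

definition support :: "'v set \<Rightarrow> ('v \<Rightarrow> rat) \<Rightarrow> 'v set" where
  "support V x = {v \<in> V. x v \<noteq> 0}"

definition is_least_in :: "('v \<Rightarrow> rat) set \<Rightarrow> ('v \<Rightarrow> rat) \<Rightarrow> bool" where
  "is_least_in A z \<longleftrightarrow> z \<in> A \<and> (\<forall>y\<in>A. z \<le> y)"

text \<open>s_h for h = [x]: the minimum of {l' in S' : [l'] = [x]}.\<close>
definition is_s_class :: "'v set \<Rightarrow> ('v \<Rightarrow> 'v \<Rightarrow> bool) \<Rightarrow> ('v \<Rightarrow> int) \<Rightarrow> ('v \<Rightarrow> rat)
     \<Rightarrow> ('v \<Rightarrow> rat) \<Rightarrow> bool" where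
  "is_s_class V adj e x s \<longleftrightarrow> is_least_in {l \<in> lipman V adj e. l - x \<in> lat V} s"

text \<open>Z_min(B): minimal nonzero element of S'(B) \<inter> L(B) (Artin fundamental cycle of B).
  For l in L(B), (l, E_v)_B = (l, E_v) for v in B.\<close>
definition is_Zmin :: "'v set \<Rightarrow> ('v \<Rightarrow> 'v \<Rightarrow> bool) \<Rightarrow> ('v \<Rightarrow> int) \<Rightarrow> 'v set
     \<Rightarrow> ('v \<Rightarrow> rat) \<Rightarrow> bool" where
  "is_Zmin V adj e B z \<longleftrightarrow>
     is_least_in {l \<in> lat B. l \<noteq> 0 \<and> (\<forall>v\<in>B. form V adj e l (Evec v) \<le> 0)} z"

definition elliptic :: "'v set \<Rightarrow> ('v \<Rightarrow> 'v \<Rightarrow> bool) \<Rightarrow> ('v \<Rightarrow> int) \<Rightarrow> bool" where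
  "elliptic V adj e \<longleftrightarrow> (\<forall>v\<in>V. e v \<le> -2)
     \<and> (\<forall>l\<in>lat V. l > 0 \<longrightarrow> chi V adj e l \<ge> 0)
     \<and> (\<exists>l\<in>lat V. l > 0 \<and> chi V adj e l = 0)"

definition Cseq :: "(int \<Rightarrow> 'v \<Rightarrow> rat) \<Rightarrow> int \<Rightarrow> 'v \<Rightarrow> rat" where
  "Cseq Z j = (\<Sum>i\<in>{-1..j}. Z i)"

text \<open>(B, Z, m) is the NN-elliptic sequence: B j = B_j, Z j = Z_{B_j}, for -1 <= j <= m.\<close>
definition NN_elliptic_seq :: "'v set \<Rightarrow> ('v \<Rightarrow> 'v \<Rightarrow> bool) \<Rightarrow> ('v \<Rightarrow> int)
     \<Rightarrow> (int \<Rightarrow> 'v set) \<Rightarrow> (int \<Rightarrow> 'v \<Rightarrow> rat) \<Rightarrow> int \<Rightarrow> bool" where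
  "NN_elliptic_seq V adj e B Z m \<longleftrightarrow>
     m \<ge> -1
     \<and> B (-1) = V
     \<and> is_s_class V adj e (ZK V adj e) (Z (-1))
     \<and> (\<forall>j. -1 \<le> j \<and> j < m \<longrightarrow> ZK V adj e - Cseq Z j \<noteq> 0
             \<and> B (j + 1) = support V (ZK V adj e - Cseq Z j))
     \<and> (\<forall>j. 0 \<le> j \<and> j \<le> m \<longrightarrow> is_Zmin V adj e (B j) (Z j))
     \<and> ZK V adj e = Cseq Z m"

end

theory Submission
  imports Defs
begin

text \<open>Put D_j = Z_K - C_j, an effective cycle supported on B_(j+1). If (C_j, E_w) <= 0 for all
  w in B_(j+1), then 2 chi(D_j) = (D_j, C_j) <= 0, so ellipticity forces chi(D_j) = 0 and
  (C_j, E_w) = 0 on B_(j+1). As B_(j+2) is contained in B_(j+1) and Z_(B_(j+1)) lies in the Lipman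
  cone of B_(j+1), this hypothesis propagates from j to j + 1, starting from C_(-1) = s_[Z_K].
  Finally 0 <= chi(D_j + E_v) = 1 - (D_j, E_v) and (D_j, E_v) >= (E_(B_(j+1)), E_v) = 1, so
  (C_j, E_v) = (Z_K, E_v) - 1 = e_v + 1.\<close>

lemma sum_apply: "sum f A x = (\<Sum>a\<in>A. f a x)"
  by (induction A rule: infinite_finite_induct) auto

lemma sum_Evec_mult:
  assumes "finite A"
  shows "(\<Sum>u\<in>A. Evec w u * f u) = (if w \<in> A then f w else 0)"
proof -
  have "(\<Sum>u\<in>A. Evec w u * f u) = (\<Sum>u\<in>A. if u = w then f u else 0)"
    by (rule sum.cong) (simp_all add: Evec_def)
  then show ?thesis
    using assms by (simp add: sum.delta)
qed

lemma rat_common_denominator: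
  fixes d :: "'a \<Rightarrow> rat"
  assumes "finite A"
  shows "\<exists>N::int. N > 0 \<and> (\<forall>a\<in>A. of_int N * d a \<in> \<int>)"
proof -
  define num where "num a = fst (quotient_of (d a))" for a
  define den where "den a = snd (quotient_of (d a))" for a
  have den_pos: "den a > 0" for a
    unfolding den_def by (rule quotient_of_denom_pos')
  have d_eq: "d a = of_int (num a) / of_int (den a)" for a
    unfolding num_def den_def by (rule quotient_of_div) simp
  have "of_int (\<Prod>b\<in>A. den b) * d a \<in> \<int>" if "a \<in> A" for a
  proof -
    have "(\<Prod>b\<in>A. den b) = den a * (\<Prod>b\<in>A - {a}. den b)"
      using that assms by (simp add: prod.remove)
    then have "of_int (\<Prod>b\<in>A. den b) * d a = of_int (num a * (\<Prod>b\<in>A - {a}. den b))"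
      using den_pos[of a] by (simp add: d_eq field_simps)
    then show ?thesis by (metis Ints_of_int)
  qed
  moreover have "(\<Prod>b\<in>A. den b) > 0"
    using den_pos by (simp add: prod_pos)
  ultimately show ?thesis by blast
qed

lemma (in vector_space) linear_inj_on_span_imp_surj_on_span:
  assumes "Vector_Spaces.linear scale scale f" and "finite S" and "independent S"
    and inj: "inj_on f (span S)" and "f ` S \<subseteq> span S"
  shows "f ` span S = span S"
proof -
  interpret Vector_Spaces.linear scale scale f by fact
  have indep: "independent (f ` S)"
    using assms(3) inj by (rule independent_injective_image)
  have card_eq: "card (f ` S) = card S"
    using inj_on_subset[OF inj span_superset] by (rule card_image)
  have "span S \<subseteq> span (f ` S)"
  proof
    fix b assume b: "b \<in> span S"
    show "b \<in> span (f ` S)"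
    proof (rule ccontr)
      assume nb: "b \<notin> span (f ` S)"
      then have "independent (insert b (f ` S))"
        using indep by (rule independent_insertI)
      moreover have "insert b (f ` S) \<subseteq> span S"
        using b assms(5) by blast
      ultimately have "card (insert b (f ` S)) \<le> card S"
        using independent_span_bound[OF assms(2)] by blast
      moreover have "b \<notin> f ` S"
        using nb span_base by blast
      ultimately show False
        using card_eq assms(2) by simp
    qed
  qed
  moreover have "span (f ` S) \<subseteq> span S"
    using assms(5) by (simp add: span_minimal)
  ultimately show ?thesis
    by (simp add: span_image)
qed

interpretation fun_space: vector_space "\<lambda>c (f :: 'a \<Rightarrow> 'b::field) x. c * f x"
  by unfold_locales (auto simp: algebra_simps)

lemma fun_space_span_Evec:
  assumes "finite V"
  shows "fun_space.span (Evec ` V) = {x. supported V x}"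
proof
  show "fun_space.span (Evec ` V) \<subseteq> {x. supported V x}"
    by (rule fun_space.span_minimal) (auto simp: fun_space.subspace_def supported_def Evec_def)
  show "{x. supported V x} \<subseteq> fun_space.span (Evec ` V)"
  proof
    fix x assume "x \<in> {x. supported V x}"
    then have "x = (\<Sum>v\<in>V. (\<lambda>w. x v * Evec v w))"
      using assms
      by (auto simp: fun_eq_iff sum_apply supported_def Evec_def if_distrib sum.delta' cong: if_cong)
    also have "\<dots> \<in> fun_space.span (Evec ` V)"
      by (intro fun_space.span_sum fun_space.span_scale fun_space.span_base) auto
    finally show "x \<in> fun_space.span (Evec ` V)" .
  qed
qed

lemma fun_space_independent_Evec: "fun_space.independent (Evec ` V)"
  unfolding fun_space.independent_explicit_finite_subsets
proof (intro allI impI ballI)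
  fix S u and f :: "'a \<Rightarrow> rat"
  assume S: "S \<subseteq> Evec ` V" "finite S" and zero: "(\<Sum>g\<in>S. (\<lambda>x. u g * g x)) = 0" and "f \<in> S"
  then obtain a where a: "f = Evec a" by auto
  have Evec_at_a: "g a = (if g = f then 1 else 0)" if g: "g \<in> S" for g
  proof -
    obtain b where "g = Evec b" using S g by blast
    then show ?thesis using a by (auto simp: Evec_def fun_eq_iff)
  qed
  have "(\<Sum>g\<in>S. u g * g a) = (\<Sum>g\<in>S. if g = f then u g else 0)"
    by (rule sum.cong) (simp_all add: Evec_at_a)
  also have "\<dots> = u f"
    using S \<open>f \<in> S\<close> by simp
  finally show "u f = 0"
    using zero by (simp add: sum_apply fun_eq_iff)
qed

locale plumbing =
  fixes V :: "'v set" and adj :: "'v \<Rightarrow> 'v \<Rightarrow> bool" and e :: "'v \<Rightarrow> int"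
  assumes finite_V: "finite V"
    and adj_sym: "adj v w \<Longrightarrow> adj w v"
begin

abbreviation pairing :: "('v \<Rightarrow> rat) \<Rightarrow> ('v \<Rightarrow> rat) \<Rightarrow> rat" (\<open>\<langle>_, _\<rangle>\<close>)
  where "\<langle>x, y\<rangle> \<equiv> form V adj e x y"

abbreviation K :: "'v \<Rightarrow> rat" where "K \<equiv> ZK V adj e"

abbreviation \<chi> :: "('v \<Rightarrow> rat) \<Rightarrow> rat" where "\<chi> \<equiv> chi V adj e"

lemma form_add_left: "\<langle>x + y, z\<rangle> = \<langle>x, z\<rangle> + \<langle>y, z\<rangle>"
  by (simp add: form_def algebra_simps sum.distrib)

lemma form_add_right: "\<langle>z, x + y\<rangle> = \<langle>z, x\<rangle> + \<langle>z, y\<rangle>"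
  by (simp add: form_def algebra_simps sum.distrib)

lemma form_diff_left: "\<langle>x - y, z\<rangle> = \<langle>x, z\<rangle> - \<langle>y, z\<rangle>"
  by (simp add: form_def algebra_simps sum_subtractf)

lemma form_diff_right: "\<langle>z, x - y\<rangle> = \<langle>z, x\<rangle> - \<langle>z, y\<rangle>"
  by (simp add: form_def algebra_simps sum_subtractf)

lemma form_uminus_right: "\<langle>x, - y\<rangle> = - \<langle>x, y\<rangle>"
  by (simp add: form_def sum_negf)

lemma form_scale_left: "\<langle>\<lambda>v. c * x v, y\<rangle> = c * \<langle>x, y\<rangle>"
  by (simp add: form_def sum_distrib_left algebra_simps)

lemma form_commute: "\<langle>x, y\<rangle> = \<langle>y, x\<rangle>"
proof -
  have "imat adj e v w = imat adj e w v" for v w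
    using adj_sym by (auto simp: imat_def)
  then show ?thesis
    unfolding form_def by (subst sum.swap) (simp add: algebra_simps)
qed

lemma form_scale_right: "\<langle>x, \<lambda>v. c * y v\<rangle> = c * \<langle>x, y\<rangle>"
  by (simp add: form_commute[of x] form_scale_left)

lemma form_Evec_right:
  assumes "w \<in> V"
  shows "\<langle>x, Evec w\<rangle> = (\<Sum>v\<in>V. x v * imat adj e v w)"
  unfolding form_def
proof (rule sum.cong[OF refl])
  fix v
  have "(\<Sum>u\<in>V. x v * Evec w u * imat adj e v u) = x v * (\<Sum>u\<in>V. Evec w u * imat adj e v u)"
    by (simp add: sum_distrib_left mult.assoc)
  also have "\<dots> = x v * imat adj e v w"
    using assms finite_V by (simp add: sum_Evec_mult)
  finally show "(\<Sum>u\<in>V. x v * Evec w u * imat adj e v u) = x v * imat adj e v w" .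
qed

lemma form_expand_right: "\<langle>x, y\<rangle> = (\<Sum>w\<in>V. y w * \<langle>x, Evec w\<rangle>)"
proof -
  have "\<langle>x, y\<rangle> = (\<Sum>w\<in>V. \<Sum>v\<in>V. x v * y w * imat adj e v w)"
    unfolding form_def by (rule sum.swap)
  also have "\<dots> = (\<Sum>w\<in>V. y w * \<langle>x, Evec w\<rangle>)"
    by (rule sum.cong) (simp_all add: form_Evec_right sum_distrib_left algebra_simps)
  finally show ?thesis .
qed

lemma form_Evec_Evec: "v \<in> V \<Longrightarrow> \<langle>Evec v, Evec v\<rangle> = of_int (e v)"
  using finite_V by (simp add: form_Evec_right sum_Evec_mult imat_def)

text \<open>Off-diagonal entries of the intersection matrix are nonnegative.\<close>
lemma form_Evec_mono:
  assumes "v \<in> V" and "x \<le> y" and "x v = y v"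
  shows "\<langle>x, Evec v\<rangle> \<le> \<langle>y, Evec v\<rangle>"
  unfolding form_Evec_right[OF assms(1)]
proof (rule sum_mono)
  fix w
  show "x w * imat adj e w v \<le> y w * imat adj e w v"
    using assms(2,3) by (cases "w = v") (auto simp: imat_def le_fun_def)
qed

lemma chi_add: "\<chi> (x + y) = \<chi> x + \<chi> y - \<langle>x, y\<rangle>"
  unfolding chi_def using form_commute[of y x]
  by (simp add: form_add_left form_add_right form_diff_right field_simps)

lemma chi_ZK_diff: "\<chi> (K - C) = \<langle>K - C, C\<rangle> / 2"
  unfolding chi_def by (simp add: form_uminus_right)

text \<open>\<open>2 \<chi> (K - C) = \<langle>C, K - C\<rangle>\<close> is a sum of nonpositive terms, while ellipticity makes
  it nonnegative.\<close>
lemma elliptic_form_Evec_eq_0_on_support: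
  assumes "elliptic V adj e" and "K - C \<in> lat V" and "0 < K - C"
    and nonpos: "\<And>w. w \<in> support V (K - C) \<Longrightarrow> \<langle>C, Evec w\<rangle> \<le> 0"
  shows "\<And>w. w \<in> support V (K - C) \<Longrightarrow> \<langle>C, Evec w\<rangle> = 0" and "\<chi> (K - C) = 0"
proof -
  define D where "D = K - C"
  have terms_nonpos: "D w * \<langle>C, Evec w\<rangle> \<le> 0" if "w \<in> V" for w
  proof (cases "D w = 0")
    case False
    then have "\<langle>C, Evec w\<rangle> \<le> 0"
      using that nonpos by (simp add: D_def support_def)
    moreover have "0 \<le> D w"
      using assms(3) by (simp add: D_def le_fun_def less_fun_def)
    ultimately show ?thesis
      by (simp add: mult_nonneg_nonpos)
  qed simp
  have chi_eq: "2 * \<chi> D = (\<Sum>w\<in>V. D w * \<langle>C, Evec w\<rangle>)"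
    using form_commute[of D C] form_expand_right[of C D] by (simp add: D_def chi_ZK_diff)
  have "\<chi> D \<ge> 0"
    using assms(1-3) by (simp add: elliptic_def D_def)
  moreover have "(\<Sum>w\<in>V. D w * \<langle>C, Evec w\<rangle>) \<le> 0"
    using terms_nonpos by (simp add: sum_nonpos)
  ultimately have chi_D: "\<chi> D = 0" and "(\<Sum>w\<in>V. D w * \<langle>C, Evec w\<rangle>) = 0"
    using chi_eq by linarith+
  then have "\<forall>w\<in>V. D w * \<langle>C, Evec w\<rangle> = 0"
    using sum_nonneg_eq_0_iff[OF finite_V, of "\<lambda>w. - (D w * \<langle>C, Evec w\<rangle>)"] terms_nonpos
    by (simp add: sum_negf)
  then show "\<langle>C, Evec w\<rangle> = 0" if "w \<in> support V (K - C)" for w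
    using that by (auto simp: D_def support_def)
  show "\<chi> (K - C) = 0"
    using chi_D by (simp add: D_def)
qed

end

lemma Eset_support_le:
  assumes "D \<in> lat V" and "0 \<le> D"
  shows "Eset (support V D) \<le> D"
proof (rule le_funI)
  fix w
  show "Eset (support V D) w \<le> D w"
  proof (cases "w \<in> support V D")
    case True
    obtain n where n: "D w = of_int n"
      using assms(1) by (auto simp: lat_def elim: Ints_cases)
    moreover have "0 \<le> D w"
      using assms(2) by (simp add: le_fun_def)
    ultimately show ?thesis
      using True by (auto simp: Eset_def support_def)
  qed (use assms(2) in \<open>auto simp: Eset_def le_fun_def\<close>)
qed

locale negdef_plumbing = plumbing +
  assumes neg_definite: "neg_definite V adj e"
begin

lemma form_self_neg:
  assumes "supported V x" and "x \<noteq> 0"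
  shows "\<langle>x, x\<rangle> < 0"
proof -
  obtain N :: int where N: "N > 0" "\<forall>v\<in>V. of_int N * x v \<in> \<int>"
    using rat_common_denominator[OF finite_V] by blast
  define l where "l v = of_int N * x v" for v
  have "l \<in> lat V"
    using assms(1) N(2) by (auto simp: lat_def l_def supported_def)
  moreover have "l \<noteq> 0"
    using assms(2) N(1) by (auto simp: l_def fun_eq_iff)
  ultimately have "\<langle>l, l\<rangle> < 0"
    using neg_definite by (simp add: neg_definite_def)
  moreover have "\<langle>l, l\<rangle> = of_int N * of_int N * \<langle>x, x\<rangle>"
    unfolding l_def by (simp add: form_scale_left form_scale_right)
  ultimately show ?thesis
    using N(1) by (simp add: mult_less_0_iff)
qed

lemma supported_eq_0_if_form_Evec_eq_0:
  assumes "supported V x" and "\<And>w. w \<in> V \<Longrightarrow> \<langle>x, Evec w\<rangle> = 0"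
  shows "x = 0"
proof (rule ccontr)
  assume "x \<noteq> 0"
  with assms(1) have "\<langle>x, x\<rangle> < 0"
    by (rule form_self_neg)
  moreover have "\<langle>x, x\<rangle> = 0"
    by (subst form_expand_right) (simp add: assms(2))
  ultimately show False by simp
qed

text \<open>The map sending x to its intersection numbers with the E_w, w in V, is injective on cycles
  supported on V by nondegeneracy, hence surjective there by counting dimensions.\<close>
lemma ex_supported_form_Evec_eq:
  "\<exists>x. supported V x \<and> (\<forall>w\<in>V. \<langle>x, Evec w\<rangle> = b w)"
proof -
  define T where "T x = (\<lambda>w. if w \<in> V then \<langle>x, Evec w\<rangle> else 0)" for x
  have "Vector_Spaces.linear (\<lambda>c f x. c * f x) (\<lambda>c f x. c * f x) T"
    by unfold_locales (auto simp: T_def fun_eq_iff form_add_left form_scale_left)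
  moreover have "inj_on T (fun_space.span (Evec ` V))"
  proof (rule inj_onI)
    fix x y
    assume "x \<in> fun_space.span (Evec ` V)" "y \<in> fun_space.span (Evec ` V)" and Txy: "T x = T y"
    then have "supported V (x - y)"
      by (simp add: fun_space_span_Evec[OF finite_V] supported_def)
    moreover have "\<langle>x - y, Evec w\<rangle> = 0" if "w \<in> V" for w
      using fun_cong[OF Txy, of w] that by (simp add: T_def form_diff_left)
    ultimately have "x - y = 0"
      by (rule supported_eq_0_if_form_Evec_eq_0)
    then show "x = y"
      by simp
  qed
  moreover have "T ` Evec ` V \<subseteq> fun_space.span (Evec ` V)"
    by (auto simp: fun_space_span_Evec[OF finite_V] supported_def T_def)
  ultimately have "T ` fun_space.span (Evec ` V) = fun_space.span (Evec ` V)"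
    using finite_V fun_space_independent_Evec
    by (intro fun_space.linear_inj_on_span_imp_surj_on_span) auto
  moreover have "(\<lambda>w. if w \<in> V then b w else 0) \<in> fun_space.span (Evec ` V)"
    by (simp add: fun_space_span_Evec[OF finite_V] supported_def)
  ultimately obtain x where x: "x \<in> fun_space.span (Evec ` V)"
    and Tx: "(\<lambda>w. if w \<in> V then b w else 0) = T x"
    by blast
  have "\<langle>x, Evec w\<rangle> = b w" if "w \<in> V" for w
    using fun_cong[OF Tx, of w] that by (simp add: T_def)
  with x show ?thesis
    by (auto simp: fun_space_span_Evec[OF finite_V])
qed

lemma form_ZK_Evec: "w \<in> V \<Longrightarrow> \<langle>K, Evec w\<rangle> = of_int (e w) + 2"
proof -
  let ?P = "\<lambda>z. supported V z \<and> (\<forall>w\<in>V. \<langle>z, Evec w\<rangle> = of_int (e w) + 2)"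
  obtain z where z: "?P z"
    using ex_supported_form_Evec_eq[of "\<lambda>w. of_int (e w) + 2"] by blast
  have "y = z" if "?P y" for y
    using supported_eq_0_if_form_Evec_eq_0[of "y - z"] that z
    by (auto simp: supported_def form_diff_left)
  then have "?P K"
    unfolding ZK_def using z by (rule theI[of ?P, rotated])
  then show "w \<in> V \<Longrightarrow> \<langle>K, Evec w\<rangle> = of_int (e w) + 2"
    by blast
qed

lemma chi_Evec: "v \<in> V \<Longrightarrow> \<chi> (Evec v) = 1"
  unfolding chi_def using form_commute[of "Evec v" K]
  by (simp add: form_diff_right form_Evec_Evec form_ZK_Evec)

text \<open>Writing \<open>l = p - n\<close> with \<open>p, n \<ge> 0\<close> of disjoint supports, off-diagonal entries being
  nonnegative gives \<open>\<langle>n, n\<rangle> = \<langle>p, n\<rangle> - \<langle>l, n\<rangle> \<ge> 0\<close>, so \<open>n = 0\<close>.\<close>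
lemma nonneg_if_form_Evec_nonpos:
  assumes "A \<subseteq> V" and "l \<in> lat A" and "\<And>w. w \<in> A \<Longrightarrow> \<langle>l, Evec w\<rangle> \<le> 0"
  shows "0 \<le> l"
proof -
  define n where "n v = (if l v < 0 then - l v else 0)" for v
  define p where "p v = (if l v < 0 then 0 else l v)" for v
  have "\<langle>l, n\<rangle> = (\<Sum>w\<in>V. n w * \<langle>l, Evec w\<rangle>)"
    by (rule form_expand_right)
  also have "\<dots> \<le> 0"
  proof (rule sum_nonpos)
    fix w
    show "n w * \<langle>l, Evec w\<rangle> \<le> 0"
    proof (cases "l w < 0")
      case True
      then have "w \<in> A"
        using assms(2) by (auto simp: lat_def supported_def)
      then show ?thesis
        using True assms(3)[of w] by (simp add: n_def mult_nonpos_nonpos)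
    qed (simp add: n_def)
  qed
  finally have "\<langle>l, n\<rangle> \<le> 0" .
  moreover have "\<langle>p, n\<rangle> \<ge> 0"
    unfolding form_def by (intro sum_nonneg) (auto simp: p_def n_def imat_def)
  moreover have "l = p - n"
    by (auto simp: fun_eq_iff p_def n_def)
  ultimately have "\<langle>n, n\<rangle> \<ge> 0"
    using form_diff_left[of p n n] by simp
  moreover have "supported V n"
    using assms(1,2) by (auto simp: lat_def supported_def n_def)
  ultimately have "n = 0"
    using form_self_neg by force
  show ?thesis
    unfolding le_fun_def
  proof
    fix v
    have "n v = 0"
      using \<open>n = 0\<close> by simp
    then show "0 v \<le> l v"
      by (simp add: n_def split: if_splits)
  qed
qed

text \<open>Ellipticity applied to \<open>\<chi> (D + E\<^sub>v) = 1 - \<langle>D, E\<^sub>v\<rangle>\<close> bounds \<open>\<langle>D, E\<^sub>v\<rangle>\<close> from above;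
  integrality gives \<open>D \<ge> Eset (support V D)\<close>, which bounds it from below.\<close>
lemma elliptic_form_Evec_eq_1:
  assumes "elliptic V adj e" and "D \<in> lat V" and "0 \<le> D" and "\<chi> D = 0"
    and v: "v \<in> V" "v \<notin> support V D" and "\<langle>Eset (support V D), Evec v\<rangle> = 1"
  shows "\<langle>D, Evec v\<rangle> = 1"
proof (rule antisym)
  have "D v = 0"
    using v by (simp add: support_def)
  then have "0 < D + Evec v"
    using assms(3) by (auto simp: less_fun_def le_fun_def Evec_def fun_eq_iff)
  moreover have "D + Evec v \<in> lat V"
    using assms(2) v(1) by (auto simp: lat_def supported_def Evec_def)
  ultimately have "0 \<le> \<chi> (D + Evec v)"
    using assms(1) by (simp add: elliptic_def)
  also have "\<chi> (D + Evec v) = 1 - \<langle>D, Evec v\<rangle>"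
    using assms(4) v(1) by (simp add: chi_add chi_Evec)
  finally show "\<langle>D, Evec v\<rangle> \<le> 1"
    by simp
  have "1 = \<langle>Eset (support V D), Evec v\<rangle>"
    using assms(7) by simp
  also have "\<dots> \<le> \<langle>D, Evec v\<rangle>"
    using v \<open>D v = 0\<close> Eset_support_le[OF assms(2,3)]
    by (intro form_Evec_mono) (auto simp: Eset_def)
  finally show "1 \<le> \<langle>D, Evec v\<rangle>" .
qed

end

lemma Cseq_succ: "-1 \<le> k \<Longrightarrow> Cseq Z (k + 1) = Cseq Z k + Z (k + 1)"
proof -
  assume "-1 \<le> k"
  then have "{-1..k + 1} = insert (k + 1) {-1..k}"
    by auto
  then show ?thesis
    by (simp add: Cseq_def add.commute)
qed

locale nn_elliptic_sequence = negdef_plumbing +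
  fixes B Z and m :: int
  assumes elliptic: "elliptic V adj e"
    and nn_seq: "NN_elliptic_seq V adj e B Z m"
begin

lemma support_residual:
  assumes "-1 \<le> k" and "k < m"
  shows "B (k + 1) = support V (K - Cseq Z k)" and "K - Cseq Z k \<noteq> 0"
  using nn_seq assms unfolding NN_elliptic_seq_def by blast+

lemma B_subset: "0 \<le> k \<Longrightarrow> k \<le> m \<Longrightarrow> B k \<subseteq> V"
  using support_residual(1)[of "k - 1"] by (simp add: support_def)

lemma Z_lat: "0 \<le> k \<Longrightarrow> k \<le> m \<Longrightarrow> Z k \<in> lat (B k)"
  and Z_form_Evec_nonpos: "0 \<le> k \<Longrightarrow> k \<le> m \<Longrightarrow> w \<in> B k \<Longrightarrow> \<langle>Z k, Evec w\<rangle> \<le> 0"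
  using nn_seq by (auto simp: NN_elliptic_seq_def is_Zmin_def is_least_in_def)

lemma Z_nonneg: "0 \<le> k \<Longrightarrow> k \<le> m \<Longrightarrow> 0 \<le> Z k"
  using B_subset Z_lat Z_form_Evec_nonpos by (rule nonneg_if_form_Evec_nonpos)

lemma residual_eq_sum:
  assumes "-1 \<le> k" and "k \<le> m"
  shows "K - Cseq Z k = (\<Sum>i\<in>{k + 1..m}. Z i)"
proof -
  have "{-1..m} = {-1..k} \<union> {k + 1..m}"
    using assms by auto
  then have "Cseq Z m = Cseq Z k + (\<Sum>i\<in>{k + 1..m}. Z i)"
    unfolding Cseq_def by (simp add: sum.union_disjoint)
  moreover have "K = Cseq Z m"
    using nn_seq by (simp add: NN_elliptic_seq_def)
  ultimately show ?thesis
    by simp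
qed

lemma residual_nonneg:
  assumes "-1 \<le> k" and "k \<le> m"
  shows "0 \<le> K - Cseq Z k"
  unfolding residual_eq_sum[OF assms] by (rule sum_nonneg) (use Z_nonneg assms in auto)

lemma residual_lat:
  assumes "-1 \<le> k" and "k \<le> m"
  shows "K - Cseq Z k \<in> lat V"
proof -
  have "Z i \<in> lat V" if "i \<in> {k + 1..m}" for i
    using Z_lat[of i] B_subset[of i] that assms by (auto simp: lat_def supported_def)
  then show ?thesis
    using assms by (auto simp: residual_eq_sum lat_def supported_def sum_apply intro!: Ints_sum)
qed

lemma B_succ_subset:
  assumes "-1 \<le> k" and "k + 1 < m"
  shows "B (k + 2) \<subseteq> B (k + 1)"
proof
  fix w
  assume "w \<in> B (k + 2)"
  moreover have "B (k + 2) = support V (K - Cseq Z k - Z (k + 1))"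
    using support_residual(1)[of "k + 1"] assms by (simp add: Cseq_succ add.assoc diff_diff_eq)
  ultimately have "w \<in> V" and "(K - Cseq Z k) w \<noteq> Z (k + 1) w"
    by (auto simp: support_def)
  moreover have "Z (k + 1) w = 0" if "w \<notin> B (k + 1)"
    using Z_lat[of "k + 1"] assms that by (auto simp: lat_def supported_def)
  moreover have "B (k + 1) = support V (K - Cseq Z k)"
    using support_residual(1)[of k] assms by simp
  ultimately show "w \<in> B (k + 1)"
    by (auto simp: support_def)
qed

lemma residual_orthogonal:
  assumes "-1 \<le> k" and "k < m"
    and "\<And>w. w \<in> B (k + 1) \<Longrightarrow> \<langle>Cseq Z k, Evec w\<rangle> \<le> 0"
  shows "\<And>w. w \<in> B (k + 1) \<Longrightarrow> \<langle>Cseq Z k, Evec w\<rangle> = 0" and "\<chi> (K - Cseq Z k) = 0"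
proof -
  have "0 < K - Cseq Z k"
    using residual_nonneg support_residual(2) assms(1,2) by (simp add: less_le)
  then show "\<And>w. w \<in> B (k + 1) \<Longrightarrow> \<langle>Cseq Z k, Evec w\<rangle> = 0" and "\<chi> (K - Cseq Z k) = 0"
    using elliptic_form_Evec_eq_0_on_support[OF elliptic residual_lat]
      support_residual(1) assms by auto
qed

lemma form_Cseq_Evec_nonpos:
  assumes "-1 \<le> k"
  shows "k < m \<Longrightarrow> w \<in> B (k + 1) \<Longrightarrow> \<langle>Cseq Z k, Evec w\<rangle> \<le> 0"
  using assms
proof (induction k arbitrary: w rule: int_ge_induct)
  case base
  have "Z (-1) \<in> lipman V adj e"
    using nn_seq unfolding NN_elliptic_seq_def is_s_class_def is_least_in_def by blast
  moreover have "w \<in> V"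
    using B_subset[of 0] base.prems by auto
  ultimately show ?case
    by (simp add: lipman_def Cseq_def)
next
  case (step k)
  have km: "k < m" and w: "w \<in> B (k + 1)"
    using step.prems B_succ_subset[OF step.hyps] by (auto simp: add.assoc)
  have "\<And>u. u \<in> B (k + 1) \<Longrightarrow> \<langle>Cseq Z k, Evec u\<rangle> \<le> 0"
    using step.IH km by blast
  then have "\<langle>Cseq Z k, Evec w\<rangle> = 0"
    using residual_orthogonal(1)[OF step.hyps km] w by blast
  moreover have "\<langle>Z (k + 1), Evec w\<rangle> \<le> 0"
    using Z_form_Evec_nonpos step.hyps step.prems(1) w by simp
  ultimately show ?case
    unfolding Cseq_succ[OF step.hyps] form_add_left by simp
qed

lemma form_Cseq_Evec:
  assumes "-1 \<le> j" and "j < m"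
    and "v \<in> V - B (j + 1)" and "\<langle>Eset (B (j + 1)), Evec v\<rangle> = 1"
  shows "\<langle>Cseq Z j, Evec v\<rangle> = of_int (e v) + 1"
proof -
  have "\<chi> (K - Cseq Z j) = 0"
    using residual_orthogonal(2) form_Cseq_Evec_nonpos assms(1,2) by blast
  then have "\<langle>K - Cseq Z j, Evec v\<rangle> = 1"
    using elliptic_form_Evec_eq_1[OF elliptic residual_lat residual_nonneg] support_residual(1)
      assms by simp
  then show ?thesis
    using form_ZK_Evec assms(3) by (simp add: form_diff_left)
qed

end

theorem mainTheorem16:
  fixes V :: "'v set" and adj :: "'v \<Rightarrow> 'v \<Rightarrow> bool" and e :: "'v \<Rightarrow> int"
    and B :: "int \<Rightarrow> 'v set" and Z :: "int \<Rightarrow> 'v \<Rightarrow> rat" and m j :: int and v :: 'v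
  assumes "is_tree V adj"
    and "neg_definite V adj e"
    and "elliptic V adj e"
    and "NN_elliptic_seq V adj e B Z m"
    and "-1 \<le> j" and "j \<le> m - 1"
    and "v \<in> V - B (j + 1)"
    and "form V adj e (Eset (B (j + 1))) (Evec v) = 1"
  shows "form V adj e (Cseq Z j) (Evec v) = of_int (e v) + 1"
proof -
  interpret nn_elliptic_sequence V adj e B Z m
    using assms(1-4) by unfold_locales (auto simp: is_tree_def)
  show ?thesis
    using form_Cseq_Evec assms(5-8) by simp
qed

end
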